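(* Let $e,m_->0$. There exist constants $0<C_1\le C_1'$ and $0<C_2\le C_2'$, depending only on $e,m_-$ (in particular independent of $k,\xi$), such that for every $k\in\mathbb{Z}\setminus\{0\}$, $\xi\in\mathbb{R}$ and every solution $B(t)=(B_1(t),B_2(t))^\top\in\mathbb{C}^2$ of $\frac{d}{dt}B=L_-(t)B$ on $[0,\infty)$, the functional $$\mathcal{E}_-(t)=\sqrt{\tfrac{p_2}{m_2}}|B_1|^2+2\frac{h_2}{\sqrt{m_2p_2}}\Re(B_1\bar B_2)+\sqrt{\tfrac{m_2}{p_2}}|B_2|^2$$ satisfies, for all $t\ge0$, $$C_1\mathcal{E}_-(0)\le\mathcal{E}_-(t)\le C_1'\mathcal{E}_-(0),\qquad C_2|B(0)|\le|B(t)|\le C_2'|B(0)|.$$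
   Context: For fixed $k\in\mathbb{Z}\setminus\{0\}$, $\xi\in\mathbb{R}$ let $\alpha(t)=k^2+(\xi-kt)^2$, so $\partial_t\alpha=-2k(\xi-kt)$. Define $h_2(t)=\frac14\alpha^{-1}\partial_t\alpha$, $m_2(t)=\frac{1}{\sqrt{m_-}}\alpha^{1/2}$, $p_2(t)=\frac{4\pi e^2}{\sqrt{m_-}\alpha^{1/2}}+\frac{2k^2\sqrt{m_-}}{\alpha^{3/2}}+\frac{1}{\sqrt{m_-}}\alpha^{1/2}$, and $$L_-(t)=\begin{pmatrix}-h_2(t) & -m_2(t)\\ p_2(t) & h_2(t)\end{pmatrix}.$$ (This is the Fourier-side symmetrized form, in the sheared coordinates $X=x-yt$, $Y=y$, of the linearized electron Euler–Poisson system around the Couette flow.) *)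

theory Defs
  imports "HOL-Analysis.Analysis"
begin

definition alpha :: "int \<Rightarrow> real \<Rightarrow> real \<Rightarrow> real" where
  "alpha k \<xi> t = (real_of_int k)\<^sup>2 + (\<xi> - real_of_int k * t)\<^sup>2"

definition dalpha :: "int \<Rightarrow> real \<Rightarrow> real \<Rightarrow> real" where
  "dalpha k \<xi> t = - 2 * real_of_int k * (\<xi> - real_of_int k * t)"

definition h2 :: "int \<Rightarrow> real \<Rightarrow> real \<Rightarrow> real" where
  "h2 k \<xi> t = (1/4) * dalpha k \<xi> t / alpha k \<xi> t"

definition m2 :: "real \<Rightarrow> int \<Rightarrow> real \<Rightarrow> real \<Rightarrow> real" where
  "m2 mm k \<xi> t = sqrt (alpha k \<xi> t) / sqrt mm"

definition p2 :: "real \<Rightarrow> real \<Rightarrow> int \<Rightarrow> real \<Rightarrow> real \<Rightarrow> real" where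
  "p2 e mm k \<xi> t =
     4 * pi * e\<^sup>2 / (sqrt mm * sqrt (alpha k \<xi> t))
     + 2 * (real_of_int k)\<^sup>2 * sqrt mm / (alpha k \<xi> t powr (3/2))
     + sqrt (alpha k \<xi> t) / sqrt mm"

text \<open>(B1,B2) solves dB/dt = L_-(t) B on [0,infinity).\<close>
definition is_sol :: "real \<Rightarrow> real \<Rightarrow> int \<Rightarrow> real \<Rightarrow> (real \<Rightarrow> complex) \<Rightarrow> (real \<Rightarrow> complex) \<Rightarrow> bool" where
  "is_sol e mm k \<xi> B1 B2 \<longleftrightarrow>
     (\<forall>t\<ge>0.
        (B1 has_vector_derivative
            (- complex_of_real (h2 k \<xi> t) * B1 t - complex_of_real (m2 mm k \<xi> t) * B2 t))
          (at t within {0..}) \<and>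
        (B2 has_vector_derivative
            (complex_of_real (p2 e mm k \<xi> t) * B1 t + complex_of_real (h2 k \<xi> t) * B2 t))
          (at t within {0..}))"

definition energy :: "real \<Rightarrow> real \<Rightarrow> int \<Rightarrow> real \<Rightarrow> (real \<Rightarrow> complex) \<Rightarrow> (real \<Rightarrow> complex) \<Rightarrow> real \<Rightarrow> real" where
  "energy e mm k \<xi> B1 B2 t =
     sqrt (p2 e mm k \<xi> t / m2 mm k \<xi> t) * (cmod (B1 t))\<^sup>2
     + 2 * h2 k \<xi> t / sqrt (m2 mm k \<xi> t * p2 e mm k \<xi> t) * Re (B1 t * cnj (B2 t))
     + sqrt (m2 mm k \<xi> t / p2 e mm k \<xi> t) * (cmod (B2 t))\<^sup>2"

definition Bnorm :: "(real \<Rightarrow> complex) \<Rightarrow> (real \<Rightarrow> complex) \<Rightarrow> real \<Rightarrow> real" where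
  "Bnorm B1 B2 t = sqrt ((cmod (B1 t))\<^sup>2 + (cmod (B2 t))\<^sup>2)"

end

theory Submission
  imports Defs
begin

(*
  The energy is the quadratic form  a |B1|^2 + 2 b Re (B1 conj B2) + |B2|^2 / a  with weight
  a = sqrt (p2 / m2), which lies between 1 and a constant, and coupling b = h2 / sqrt (m2 p2),
  which satisfies |b| <= 1/2; so it is comparable to |B|^2.  Because L_- is in symmetrized form
  (p2 = m2 a^2 and b = h2 / (m2 a)), the contributions of the equation cancel in dE/dt, which
  therefore only involves a' and b'.  Both are O(k^2 / alpha), and k^2 / alpha is the derivative
  of arctan (t - xi / k), whose total variation is at most pi.  A two-sided Gronwall argument
  then bounds E(t) / E(0) between exp (-2 C pi) and exp (2 C pi), with C depending only on
  e and m_-.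
*)

section \<open>Quadratic forms\<close>

definition qform :: "real \<Rightarrow> real \<Rightarrow> complex \<Rightarrow> complex \<Rightarrow> real" where
  "qform a b z w = a * (cmod z)\<^sup>2 + 2 * b * Re (z * cnj w) + (cmod w)\<^sup>2 / a"

lemma qform_components:
  "qform a b z w = a * ((Re z)\<^sup>2 + (Im z)\<^sup>2) + 2 * b * (Re z * Re w + Im z * Im w)
     + ((Re w)\<^sup>2 + (Im w)\<^sup>2) / a"
  by (simp add: qform_def cmod_power2)

lemma two_abs_Re_mult_cnj_le:
  assumes "a > 0"
  shows "2 * \<bar>Re (z * cnj w)\<bar> \<le> a * (cmod z)\<^sup>2 + (cmod w)\<^sup>2 / a"
proof -
  have "\<bar>Re (z * cnj w)\<bar> \<le> cmod z * cmod w"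
    using abs_Re_le_cmod[of "z * cnj w"] by (simp add: norm_mult)
  moreover have "a * (cmod z)\<^sup>2 + (cmod w)\<^sup>2 / a - 2 * cmod z * cmod w = (a * cmod z - cmod w)\<^sup>2 / a"
    using assms by (simp add: field_simps power2_eq_square)
  moreover have "(a * cmod z - cmod w)\<^sup>2 / a \<ge> 0"
    using assms by simp
  ultimately show ?thesis
    by linarith
qed

lemma qform_bounds:
  assumes "a > 0" and "\<bar>b\<bar> \<le> 1/2"
  shows "(a * (cmod z)\<^sup>2 + (cmod w)\<^sup>2 / a) / 2 \<le> qform a b z w"
    and "qform a b z w \<le> 3 * (a * (cmod z)\<^sup>2 + (cmod w)\<^sup>2 / a) / 2"
proof -
  define S r where "S = a * (cmod z)\<^sup>2 + (cmod w)\<^sup>2 / a" and "r = Re (z * cnj w)"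
  have "\<bar>2 * b * r\<bar> = \<bar>b\<bar> * (2 * \<bar>r\<bar>)"
    by (simp add: abs_mult)
  also have "\<dots> \<le> 1/2 * S"
    using assms two_abs_Re_mult_cnj_le[OF assms(1)] unfolding S_def r_def by (intro mult_mono) auto
  finally have "\<bar>2 * b * r\<bar> \<le> S / 2"
    by simp
  then have "S / 2 \<le> S + 2 * b * r" and "S + 2 * b * r \<le> 3 * S / 2"
    by (simp_all add: abs_le_iff)
  moreover have "qform a b z w = S + 2 * b * r"
    unfolding qform_def S_def r_def by simp
  ultimately show "S / 2 \<le> qform a b z w" and "qform a b z w \<le> 3 * S / 2"
    by simp_all
qed

lemma qform_nonneg:
  assumes "a > 0" and "\<bar>b\<bar> \<le> 1/2"
  shows "0 \<le> qform a b z w"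
proof -
  have "0 \<le> (a * (cmod z)\<^sup>2 + (cmod w)\<^sup>2 / a) / 2"
    using assms(1) by simp
  then show ?thesis
    using qform_bounds(1)[OF assms, of z w] by linarith
qed

lemma abs_qform_derivative_le:
  assumes "a > 0" and "\<bar>b\<bar> \<le> 1/2"
  shows "\<bar>a' * (cmod z)\<^sup>2 + 2 * b' * Re (z * cnj w) - a' * (cmod w)\<^sup>2 / a\<^sup>2\<bar>
    \<le> 2 * (\<bar>a'\<bar> / a + \<bar>b'\<bar>) * qform a b z w"
proof -
  define S r where "S = a * (cmod z)\<^sup>2 + (cmod w)\<^sup>2 / a" and "r = Re (z * cnj w)"
  have "a' * (cmod z)\<^sup>2 - a' * (cmod w)\<^sup>2 / a\<^sup>2 = a' / a * (a * (cmod z)\<^sup>2 - (cmod w)\<^sup>2 / a)"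
    using assms by (simp add: field_simps power2_eq_square)
  then have "\<bar>a' * (cmod z)\<^sup>2 - a' * (cmod w)\<^sup>2 / a\<^sup>2\<bar>
      = \<bar>a'\<bar> / a * \<bar>a * (cmod z)\<^sup>2 - (cmod w)\<^sup>2 / a\<bar>"
    using assms by (simp add: abs_mult)
  also have "\<dots> \<le> \<bar>a'\<bar> / a * S"
    unfolding S_def using assms by (intro mult_left_mono) (auto simp: abs_le_iff)
  finally have "\<bar>a' * (cmod z)\<^sup>2 - a' * (cmod w)\<^sup>2 / a\<^sup>2\<bar> \<le> \<bar>a'\<bar> / a * S" .
  moreover have "\<bar>2 * b' * r\<bar> \<le> \<bar>b'\<bar> * S"
    using mult_left_mono[OF two_abs_Re_mult_cnj_le[OF assms(1), of z w], of "\<bar>b'\<bar>"]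
    unfolding S_def r_def by (simp add: abs_mult)
  ultimately have "\<bar>a' * (cmod z)\<^sup>2 + 2 * b' * r - a' * (cmod w)\<^sup>2 / a\<^sup>2\<bar>
      \<le> (\<bar>a'\<bar> / a + \<bar>b'\<bar>) * S"
    by (simp add: algebra_simps abs_le_iff)
  also have "\<dots> \<le> (\<bar>a'\<bar> / a + \<bar>b'\<bar>) * (2 * qform a b z w)"
    unfolding S_def using assms qform_bounds(1)[OF assms, of z w] by (intro mult_left_mono) auto
  finally show ?thesis
    unfolding r_def by (simp only: mult_ac)
qed

lemma qform_has_derivative:
  fixes B1 B2 :: "real \<Rightarrow> complex" and a b :: "real \<Rightarrow> real"
  assumes B1: "(B1 has_vector_derivative (- of_real h * B1 t - of_real m * B2 t)) (at t within S)"
    and B2: "(B2 has_vector_derivative (of_real p * B1 t + of_real h * B2 t)) (at t within S)"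
    and a: "(a has_real_derivative a') (at t within S)"
    and b: "(b has_real_derivative b') (at t within S)"
    and pos: "a t > 0" "m > 0" and p: "p = m * (a t)\<^sup>2" and bh: "b t = h / (m * a t)"
  shows "((\<lambda>t. qform (a t) (b t) (B1 t) (B2 t)) has_real_derivative
      a' * (cmod (B1 t))\<^sup>2 + 2 * b' * Re (B1 t * cnj (B2 t)) - a' * (cmod (B2 t))\<^sup>2 / (a t)\<^sup>2)
      (at t within S)"
proof -
  have a_nz: "a t \<noteq> 0" using pos by simp
  show ?thesis
    unfolding qform_components cmod_power2
    by (rule derivative_eq_intros B1 B2 a b a_nz refl)+
      (use pos in \<open>simp add: p bh field_simps power2_eq_square\<close>)
qed

lemma weighted_sum_bounds:
  fixes a A x y :: real
  assumes "1 \<le> a" and "a \<le> A" and "0 \<le> x" and "0 \<le> y"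
  shows "(x + y) / A \<le> a * x + y / a" and "a * x + y / a \<le> A * (x + y)"
proof -
  have "x / A \<le> x / 1" and "y / A \<le> y / a"
    using assms by (intro divide_left_mono; simp)+
  moreover have "x \<le> a * x"
    using assms mult_right_mono[of 1 a x] by simp
  ultimately show "(x + y) / A \<le> a * x + y / a"
    by (simp add: add_divide_distrib)
  have "y / a \<le> y / 1" and "a * x \<le> A * x"
    using assms by (intro divide_left_mono mult_right_mono; simp)+
  moreover have "y \<le> A * y"
    using assms mult_right_mono[of 1 A y] by simp
  ultimately show "a * x + y / a \<le> A * (x + y)"
    by (simp add: algebra_simps)
qed

lemma norm_bounds_of_energy_bounds:
  fixes n0 n1 E0 E1 A c c' :: real
  assumes "A > 0" and "c > 0" and "c \<le> c'" and "0 \<le> n0" and "0 \<le> n1"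
    and "n0\<^sup>2 / (2 * A) \<le> E0" and "E0 \<le> 3 * A / 2 * n0\<^sup>2"
    and "n1\<^sup>2 / (2 * A) \<le> E1" and "E1 \<le> 3 * A / 2 * n1\<^sup>2"
    and "c * E0 \<le> E1" and "E1 \<le> c' * E0"
  shows "sqrt (c / 3) / A * n0 \<le> n1" and "n1 \<le> A * sqrt (3 * c') * n0"
proof -
  have "(sqrt (c / 3) / A * n0)\<^sup>2 = (sqrt (c / 3))\<^sup>2 * n0\<^sup>2 / A\<^sup>2"
    by (simp add: power_mult_distrib power_divide)
  also have "\<dots> = c * (n0\<^sup>2 / (2 * A)) / (3 * A / 2)"
    using assms(1,2) by (simp add: power2_eq_square)
  also have "\<dots> \<le> (3 * A / 2 * n1\<^sup>2) / (3 * A / 2)"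
  proof (rule divide_right_mono)
    show "c * (n0\<^sup>2 / (2 * A)) \<le> 3 * A / 2 * n1\<^sup>2"
      using mult_left_mono[OF assms(6), of c] assms(2,9,10) by linarith
  qed (use assms(1) in simp)
  also have "\<dots> = n1\<^sup>2"
    using assms(1) by simp
  finally show "sqrt (c / 3) / A * n0 \<le> n1"
    using assms(5) by (rule power2_le_imp_le)
  have "n1\<^sup>2 = 2 * A * (n1\<^sup>2 / (2 * A))"
    using assms(1) by simp
  also have "\<dots> \<le> 2 * A * (c' * (3 * A / 2 * n0\<^sup>2))"
  proof (rule mult_left_mono)
    show "n1\<^sup>2 / (2 * A) \<le> c' * (3 * A / 2 * n0\<^sup>2)"
      using mult_left_mono[OF assms(7), of c'] assms(2,3,8,11) by linarith
  qed (use assms(1) in simp)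
  also have "\<dots> = A\<^sup>2 * (3 * c') * n0\<^sup>2"
    by (simp add: power2_eq_square)
  also have "\<dots> = (A * sqrt (3 * c') * n0)\<^sup>2"
    using assms(2,3) by (simp only: power_mult_distrib real_sqrt_pow2 mult_nonneg_nonneg)
  finally have "n1\<^sup>2 \<le> (A * sqrt (3 * c') * n0)\<^sup>2" .
  moreover have "0 \<le> A * sqrt (3 * c') * n0"
    using assms(1-4) by simp
  ultimately show "n1 \<le> A * sqrt (3 * c') * n0"
    by (rule power2_le_imp_le)
qed

section \<open>A two-sided Gronwall inequality\<close>

lemma le_of_nonneg_derivative_on_halfline:
  fixes f :: "real \<Rightarrow> real"
  assumes deriv: "\<And>x. x \<ge> 0 \<Longrightarrow> \<exists>D. (f has_real_derivative D) (at x within {0..}) \<and> 0 \<le> D"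
    and "t \<ge> 0"
  shows "f 0 \<le> f t"
proof (rule DERIV_nonneg_imp_increasing_open[OF \<open>t \<ge> 0\<close>])
  fix x assume x: "0 < x" "x < t"
  have "at x within {0..} = at x"
    by (rule at_within_interior) (use x in auto)
  then show "\<exists>y. (f has_real_derivative y) (at x) \<and> 0 \<le> y"
    using deriv[of x] x by auto
next
  have "continuous_on {0..} f"
    using deriv by (force simp: continuous_on_eq_continuous_within intro: DERIV_continuous)
  then show "continuous_on {0..t} f"
    by (rule continuous_on_subset) auto
qed

lemma two_sided_gronwall:
  fixes f w w' :: "real \<Rightarrow> real"
  assumes f: "\<And>x. x \<ge> 0 \<Longrightarrow>
      \<exists>D. (f has_real_derivative D) (at x within {0..}) \<and> \<bar>D\<bar> \<le> w' x * f x"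
    and w: "\<And>x. x \<ge> 0 \<Longrightarrow> (w has_real_derivative w' x) (at x within {0..})"
    and "t \<ge> 0"
  shows "f 0 * exp (w 0 - w t) \<le> f t" and "f t \<le> f 0 * exp (w t - w 0)"
proof -
  have "f 0 * exp (w 0) \<le> f t * exp (w t)"
  proof (rule le_of_nonneg_derivative_on_halfline[OF _ \<open>t \<ge> 0\<close>])
    fix x :: real assume "x \<ge> 0"
    then obtain D where D: "(f has_real_derivative D) (at x within {0..})" "\<bar>D\<bar> \<le> w' x * f x"
      using f by blast
    have "((\<lambda>x. f x * exp (w x)) has_real_derivative (D + w' x * f x) * exp (w x)) (at x within {0..})"
      by (rule derivative_eq_intros D w \<open>x \<ge> 0\<close> refl | simp add: algebra_simps)+
    moreover have "0 \<le> (D + w' x * f x) * exp (w x)"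
      using D(2) by (simp add: abs_le_iff)
    ultimately show "\<exists>D. ((\<lambda>x. f x * exp (w x)) has_real_derivative D) (at x within {0..}) \<and> 0 \<le> D"
      by blast
  qed
  then show "f 0 * exp (w 0 - w t) \<le> f t"
    by (simp add: exp_diff pos_divide_le_eq)
  have "- (f 0 * exp (- w 0)) \<le> - (f t * exp (- w t))"
  proof (rule le_of_nonneg_derivative_on_halfline[OF _ \<open>t \<ge> 0\<close>])
    fix x :: real assume "x \<ge> 0"
    then obtain D where D: "(f has_real_derivative D) (at x within {0..})" "\<bar>D\<bar> \<le> w' x * f x"
      using f by blast
    have "((\<lambda>x. - (f x * exp (- w x))) has_real_derivative (w' x * f x - D) * exp (- w x))
        (at x within {0..})"
      by (rule derivative_eq_intros D w \<open>x \<ge> 0\<close> refl | simp add: algebra_simps)+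
    moreover have "0 \<le> (w' x * f x - D) * exp (- w x)"
      using D(2) by (simp add: abs_le_iff)
    ultimately show "\<exists>D. ((\<lambda>x. - (f x * exp (- w x))) has_real_derivative D) (at x within {0..}) \<and> 0 \<le> D"
      by blast
  qed
  then show "f t \<le> f 0 * exp (w t - w 0)"
    by (simp add: exp_diff exp_minus field_simps)
qed

section \<open>The symbol alpha\<close>

lemma one_le_sq_of_int:
  assumes "k \<noteq> 0"
  shows "1 \<le> (real_of_int k)\<^sup>2"
proof -
  have "1 \<le> \<bar>k\<bar>"
    using assms by linarith
  then have "1 \<le> \<bar>k\<bar> * \<bar>k\<bar>"
    using mult_mono[of 1 "\<bar>k\<bar>" 1 "\<bar>k\<bar>"] by simp
  then show ?thesis
    by (simp add: power2_eq_square flip: of_int_mult abs_mult)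
qed

lemma sq_le_alpha: "(real_of_int k)\<^sup>2 \<le> alpha k \<xi> t"
  by (simp add: alpha_def)

lemma one_le_alpha: "k \<noteq> 0 \<Longrightarrow> 1 \<le> alpha k \<xi> t"
  using one_le_sq_of_int sq_le_alpha order_trans by blast

lemma alpha_pos: "k \<noteq> 0 \<Longrightarrow> 0 < alpha k \<xi> t"
  using one_le_alpha[of k \<xi> t] by linarith

lemma abs_dalpha_le_alpha: "\<bar>dalpha k \<xi> t\<bar> \<le> alpha k \<xi> t"
proof -
  define s where "s = \<xi> - real_of_int k * t"
  have "\<bar>dalpha k \<xi> t\<bar> = 2 * \<bar>real_of_int k\<bar> * \<bar>s\<bar>"
    by (simp add: dalpha_def s_def abs_mult)
  also have "\<dots> \<le> (real_of_int k)\<^sup>2 + s\<^sup>2"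
    using sum_squares_bound[of "\<bar>real_of_int k\<bar>" "\<bar>s\<bar>"] by simp
  finally show ?thesis
    by (simp add: alpha_def s_def)
qed

lemma dalpha_sq_le: "(dalpha k \<xi> t)\<^sup>2 \<le> 4 * (real_of_int k)\<^sup>2 * alpha k \<xi> t"
  by (simp add: alpha_def dalpha_def power_mult_distrib mult_left_mono)

lemma alpha_has_derivative: "((\<lambda>t. alpha k \<xi> t) has_real_derivative dalpha k \<xi> t) (at t)"
  unfolding alpha_def dalpha_def
  by (auto intro!: derivative_eq_intros simp: algebra_simps)

lemma dalpha_has_derivative: "((\<lambda>t. dalpha k \<xi> t) has_real_derivative 2 * (real_of_int k)\<^sup>2) (at t)"
  unfolding dalpha_def
  by (auto intro!: derivative_eq_intros simp: power2_eq_square)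

lemma h2_has_derivative:
  assumes "k \<noteq> 0"
  shows "((\<lambda>t. h2 k \<xi> t) has_real_derivative
    (real_of_int k)\<^sup>2 / (2 * alpha k \<xi> t) - (dalpha k \<xi> t)\<^sup>2 / (4 * (alpha k \<xi> t)\<^sup>2)) (at t)"
  using alpha_pos[OF assms, of \<xi> t] unfolding h2_def
  by (auto intro!: derivative_eq_intros alpha_has_derivative dalpha_has_derivative
      simp: field_simps power2_eq_square)

lemma arctan_shift_has_derivative:
  assumes "k \<noteq> 0"
  shows "((\<lambda>t. arctan (t - \<xi> / real_of_int k)) has_real_derivative (real_of_int k)\<^sup>2 / alpha k \<xi> t) (at t)"
proof -
  have "1 + (t - \<xi> / real_of_int k)\<^sup>2 = alpha k \<xi> t / (real_of_int k)\<^sup>2"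
    using assms by (simp add: alpha_def field_simps power2_eq_square)
  then show ?thesis
    using alpha_pos[OF assms, of \<xi> t]
    by (auto intro!: derivative_eq_intros)
qed

section \<open>Coefficients of the energy\<close>

definition p2_over_m2 :: "real \<Rightarrow> real \<Rightarrow> int \<Rightarrow> real \<Rightarrow> real \<Rightarrow> real" where
  "p2_over_m2 e mm k \<xi> t =
     1 + 4 * pi * e\<^sup>2 / alpha k \<xi> t + 2 * (real_of_int k)\<^sup>2 * mm / (alpha k \<xi> t)\<^sup>2"

definition m2_times_p2 :: "real \<Rightarrow> real \<Rightarrow> int \<Rightarrow> real \<Rightarrow> real \<Rightarrow> real" where
  "m2_times_p2 e mm k \<xi> t =
     4 * pi * e\<^sup>2 / mm + 2 * (real_of_int k)\<^sup>2 / alpha k \<xi> t + alpha k \<xi> t / mm"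

lemma m2_pos: "k \<noteq> 0 \<Longrightarrow> mm > 0 \<Longrightarrow> m2 mm k \<xi> t > 0"
  using one_le_alpha[of k \<xi> t] by (simp add: m2_def)

lemma m2_times_p2_pos: "k \<noteq> 0 \<Longrightarrow> mm > 0 \<Longrightarrow> m2_times_p2 e mm k \<xi> t > 0"
  using alpha_pos[of k \<xi> t] by (simp add: m2_times_p2_def add_nonneg_pos)

lemma p2_eq_m2_mult:
  assumes "k \<noteq> 0" and "mm > 0"
  shows "p2 e mm k \<xi> t = m2 mm k \<xi> t * p2_over_m2 e mm k \<xi> t"
proof -
  obtain s where s: "s > 0" "alpha k \<xi> t = s\<^sup>2"
    using alpha_pos[OF assms(1), of \<xi> t] by (intro that[of "sqrt (alpha k \<xi> t)"]) auto
  obtain r where r: "r > 0" "mm = r\<^sup>2"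
    using assms(2) by (intro that[of "sqrt mm"]) auto
  have "alpha k \<xi> t powr (3/2) = s ^ 3"
  proof -
    have "sqrt (s ^ 6) = s ^ 3"
      using s by (intro real_sqrt_unique) (simp_all flip: power_mult)
    then show ?thesis
      using s by (simp add: powr_half_sqrt_powr)
  qed
  moreover have "sqrt (alpha k \<xi> t) = s" and "sqrt mm = r"
    using s r by simp_all
  ultimately show ?thesis
    unfolding p2_def m2_def p2_over_m2_def
    using s r by (simp add: field_simps power2_eq_square power3_eq_cube)
qed

lemma m2_mult_p2:
  assumes "k \<noteq> 0" and "mm > 0"
  shows "m2 mm k \<xi> t * p2 e mm k \<xi> t = m2_times_p2 e mm k \<xi> t"
proof -
  define a where "a = alpha k \<xi> t"
  have "a > 0"
    using alpha_pos[OF assms(1)] unfolding a_def .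
  have "m2 mm k \<xi> t * m2 mm k \<xi> t = a / mm"
    using \<open>a > 0\<close> assms(2) by (simp add: m2_def a_def real_sqrt_mult_self flip: real_sqrt_mult)
  then show ?thesis
    using \<open>a > 0\<close> assms(2) unfolding p2_eq_m2_mult[OF assms] mult.assoc[symmetric]
    by (simp add: p2_over_m2_def m2_times_p2_def flip: a_def) (simp add: field_simps power2_eq_square)
qed

definition weight :: "real \<Rightarrow> real \<Rightarrow> int \<Rightarrow> real \<Rightarrow> real \<Rightarrow> real" where
  "weight e mm k \<xi> t = sqrt (p2 e mm k \<xi> t / m2 mm k \<xi> t)"

definition coupling :: "real \<Rightarrow> real \<Rightarrow> int \<Rightarrow> real \<Rightarrow> real \<Rightarrow> real" where
  "coupling e mm k \<xi> t = h2 k \<xi> t / sqrt (m2 mm k \<xi> t * p2 e mm k \<xi> t)"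

lemma energy_eq_qform:
  "energy e mm k \<xi> B1 B2 t = qform (weight e mm k \<xi> t) (coupling e mm k \<xi> t) (B1 t) (B2 t)"
  by (simp add: energy_def qform_def weight_def coupling_def real_sqrt_divide mult.commute)

lemma weight_eq: "k \<noteq> 0 \<Longrightarrow> mm > 0 \<Longrightarrow> weight e mm k \<xi> t = sqrt (p2_over_m2 e mm k \<xi> t)"
  using m2_pos[of k mm \<xi> t] by (simp add: weight_def p2_eq_m2_mult)

lemma coupling_eq:
  "k \<noteq> 0 \<Longrightarrow> mm > 0 \<Longrightarrow> coupling e mm k \<xi> t = h2 k \<xi> t / sqrt (m2_times_p2 e mm k \<xi> t)"
  by (simp add: coupling_def m2_mult_p2)

lemma p2_over_m2_bounds:
  assumes "k \<noteq> 0" and "mm > 0"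
  shows "1 \<le> p2_over_m2 e mm k \<xi> t" and "p2_over_m2 e mm k \<xi> t \<le> 1 + 4 * pi * e\<^sup>2 + 2 * mm"
proof -
  define a K where "a = alpha k \<xi> t" and "K = (real_of_int k)\<^sup>2"
  have a: "1 \<le> a" "K \<le> a" "0 \<le> K"
    using one_le_alpha[OF assms(1)] sq_le_alpha unfolding a_def K_def by auto
  have "4 * pi * e\<^sup>2 / a \<le> 4 * pi * e\<^sup>2 / 1"
    using a by (intro divide_left_mono) auto
  moreover have "1 * a \<le> a * a"
    using a by (intro mult_right_mono) auto
  then have "K \<le> a\<^sup>2"
    using a unfolding power2_eq_square by linarith
  then have "2 * K * mm / a\<^sup>2 \<le> 2 * mm"
    using assms(2) a by (simp add: pos_divide_le_eq)
  ultimately show "p2_over_m2 e mm k \<xi> t \<le> 1 + 4 * pi * e\<^sup>2 + 2 * mm"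
    by (simp add: p2_over_m2_def flip: a_def K_def)
  show "1 \<le> p2_over_m2 e mm k \<xi> t"
    using a assms(2) by (simp add: p2_over_m2_def flip: a_def K_def)
qed

lemma weight_bounds:
  assumes "k \<noteq> 0" and "mm > 0"
  shows "1 \<le> weight e mm k \<xi> t" and "weight e mm k \<xi> t \<le> sqrt (1 + 4 * pi * e\<^sup>2 + 2 * mm)"
  using p2_over_m2_bounds[OF assms] by (simp_all add: weight_eq[OF assms])

lemma abs_coupling_le:
  assumes "k \<noteq> 0" and "mm > 0"
  shows "\<bar>coupling e mm k \<xi> t\<bar> \<le> 1/2"
proof -
  define a Q where "a = alpha k \<xi> t" and "Q = m2_times_p2 e mm k \<xi> t"
  have a: "1 \<le> a"
    using one_le_alpha[OF assms(1)] unfolding a_def by auto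
  have Q: "2 * (real_of_int k)\<^sup>2 / a \<le> Q"
    using assms(2) a by (simp add: Q_def m2_times_p2_def flip: a_def)
  have "(h2 k \<xi> t)\<^sup>2 = (dalpha k \<xi> t)\<^sup>2 / (16 * a\<^sup>2)"
    by (simp add: h2_def a_def power_divide power_mult_distrib)
  also have "\<dots> \<le> 4 * (real_of_int k)\<^sup>2 * a / (16 * a\<^sup>2)"
    using dalpha_sq_le unfolding a_def by (intro divide_right_mono) auto
  also have "\<dots> = (2 * (real_of_int k)\<^sup>2 / a) / 8"
    using a by (simp add: power2_eq_square)
  also have "\<dots> \<le> Q / 8"
    using Q by simp
  finally have "(h2 k \<xi> t)\<^sup>2 \<le> Q / 8" .
  moreover have "0 < Q"
    using m2_times_p2_pos[OF assms] unfolding Q_def .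
  ultimately have "(h2 k \<xi> t / sqrt Q)\<^sup>2 \<le> (1/2)\<^sup>2"
    by (simp add: power_divide field_simps)
  then show ?thesis
    unfolding coupling_eq[OF assms] Q_def[symmetric] by (simp add: power2_le_iff_abs_le)
qed

lemma p2_over_m2_has_derivative:
  assumes "k \<noteq> 0"
  shows "((\<lambda>t. p2_over_m2 e mm k \<xi> t) has_real_derivative
    - (4 * pi * e\<^sup>2 / (alpha k \<xi> t)\<^sup>2 + 4 * (real_of_int k)\<^sup>2 * mm / alpha k \<xi> t ^ 3) * dalpha k \<xi> t) (at t)"
  unfolding p2_over_m2_def using alpha_pos[OF assms, of \<xi> t]
  by (auto intro!: derivative_eq_intros alpha_has_derivative
      simp: field_simps power2_eq_square power3_eq_cube)

lemma abs_p2_over_m2_derivative_le: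
  assumes "k \<noteq> 0" and "mm > 0"
  shows "\<bar>(4 * pi * e\<^sup>2 / (alpha k \<xi> t)\<^sup>2 + 4 * (real_of_int k)\<^sup>2 * mm / alpha k \<xi> t ^ 3) * dalpha k \<xi> t\<bar>
    \<le> (4 * pi * e\<^sup>2 + 4 * mm) * ((real_of_int k)\<^sup>2 / alpha k \<xi> t)"
proof -
  define a K where "a = alpha k \<xi> t" and "K = (real_of_int k)\<^sup>2"
  have a: "1 \<le> a" "K \<le> a" "1 \<le> K"
    using one_le_alpha[OF assms(1)] sq_le_alpha one_le_sq_of_int[OF assms(1)]
    unfolding a_def K_def by auto
  have "0 \<le> 4 * pi * e\<^sup>2 / a\<^sup>2 + 4 * K * mm / a ^ 3"
    using a assms(2) by simp
  then have "\<bar>(4 * pi * e\<^sup>2 / a\<^sup>2 + 4 * K * mm / a ^ 3) * dalpha k \<xi> t\<bar>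
      \<le> (4 * pi * e\<^sup>2 / a\<^sup>2 + 4 * K * mm / a ^ 3) * a"
    using abs_dalpha_le_alpha[of k \<xi> t] unfolding a_def by (simp add: abs_mult mult_left_mono)
  also have "\<dots> = 4 * pi * e\<^sup>2 * (1 / a) + 4 * mm * (K / a\<^sup>2)"
    using a by (simp add: field_simps power2_eq_square power3_eq_cube)
  also have "\<dots> \<le> 4 * pi * e\<^sup>2 * (K / a) + 4 * mm * (K / a)"
  proof -
    have "a * 1 \<le> a * a"
      using a by (intro mult_left_mono) auto
    then have "K / a\<^sup>2 \<le> K / a"
      using a by (intro divide_left_mono) (auto simp: power2_eq_square)
    moreover have "1 / a \<le> K / a"
      using a by (intro divide_right_mono) auto
    ultimately show ?thesis
      using assms(2) by (intro add_mono mult_left_mono) auto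
  qed
  also have "\<dots> = (4 * pi * e\<^sup>2 + 4 * mm) * (K / a)"
    by (rule distrib_right [symmetric])
  finally show ?thesis
    by (simp only: a_def K_def)
qed

lemma weight_derivative:
  assumes "k \<noteq> 0" and "mm > 0"
  shows "(weight e mm k \<xi> has_real_derivative deriv (weight e mm k \<xi>) t) (at t)"
    and "\<bar>deriv (weight e mm k \<xi>) t\<bar> / weight e mm k \<xi> t
      \<le> (2 * pi * e\<^sup>2 + 2 * mm) * (real_of_int k)\<^sup>2 / alpha k \<xi> t"
proof -
  define R R' where "R = p2_over_m2 e mm k \<xi> t"
    and "R' = - (4 * pi * e\<^sup>2 / (alpha k \<xi> t)\<^sup>2 + 4 * (real_of_int k)\<^sup>2 * mm / alpha k \<xi> t ^ 3)
      * dalpha k \<xi> t"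
  have R: "1 \<le> R"
    using p2_over_m2_bounds(1)[OF assms] unfolding R_def .
  have "weight e mm k \<xi> = (\<lambda>t. sqrt (p2_over_m2 e mm k \<xi> t))"
    using weight_eq[OF assms] by auto
  then have D: "(weight e mm k \<xi> has_real_derivative R' / (2 * sqrt R)) (at t)"
    using p2_over_m2_has_derivative[OF assms(1)] R unfolding R_def R'_def
    by (auto intro!: derivative_eq_intros simp: field_simps)
  then show "(weight e mm k \<xi> has_real_derivative deriv (weight e mm k \<xi>) t) (at t)"
    by (simp add: DERIV_imp_deriv)
  have "\<bar>deriv (weight e mm k \<xi>) t\<bar> / weight e mm k \<xi> t = \<bar>R'\<bar> / 2 / R"
    using DERIV_imp_deriv[OF D] R weight_eq[OF assms] by (simp add: R_def abs_mult)
  also have "\<dots> \<le> \<bar>R'\<bar> / 2 / 1"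
    using R by (intro divide_left_mono) auto
  also have "\<dots> \<le> (4 * pi * e\<^sup>2 + 4 * mm) * ((real_of_int k)\<^sup>2 / alpha k \<xi> t) / 2"
    using abs_p2_over_m2_derivative_le[OF assms, of e \<xi> t]
    unfolding R'_def mult_minus_left abs_minus_cancel by simp
  also have "\<dots> = (2 * pi * e\<^sup>2 + 2 * mm) * (real_of_int k)\<^sup>2 / alpha k \<xi> t"
    using alpha_pos[OF assms(1), of \<xi> t] by (simp add: field_simps)
  finally show "\<bar>deriv (weight e mm k \<xi>) t\<bar> / weight e mm k \<xi> t
      \<le> (2 * pi * e\<^sup>2 + 2 * mm) * (real_of_int k)\<^sup>2 / alpha k \<xi> t" .
qed

lemma m2_times_p2_has_derivative:
  assumes "k \<noteq> 0" and "mm > 0"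
  shows "((\<lambda>t. m2_times_p2 e mm k \<xi> t) has_real_derivative
    (1 / mm - 2 * (real_of_int k)\<^sup>2 / (alpha k \<xi> t)\<^sup>2) * dalpha k \<xi> t) (at t)"
  unfolding m2_times_p2_def using alpha_pos[OF assms(1), of \<xi> t] assms(2)
  by (auto intro!: derivative_eq_intros alpha_has_derivative simp: field_simps power2_eq_square)

lemma abs_m2_times_p2_derivative_le:
  assumes "k \<noteq> 0" and "mm > 0"
  shows "\<bar>(1 / mm - 2 * (real_of_int k)\<^sup>2 / (alpha k \<xi> t)\<^sup>2) * dalpha k \<xi> t\<bar>
    \<le> m2_times_p2 e mm k \<xi> t * \<bar>dalpha k \<xi> t\<bar> / alpha k \<xi> t"
proof -
  define a K where "a = alpha k \<xi> t" and "K = (real_of_int k)\<^sup>2"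
  have a: "0 < a" "0 \<le> K"
    using alpha_pos[OF assms(1)] unfolding a_def K_def by auto
  have "\<bar>(1 / mm - 2 * K / a\<^sup>2) * dalpha k \<xi> t\<bar> \<le> (1 / mm + 2 * K / a\<^sup>2) * \<bar>dalpha k \<xi> t\<bar>"
    unfolding abs_mult using assms(2) a by (intro mult_right_mono) (auto simp: abs_le_iff)
  also have "\<dots> = (a / mm + 2 * K / a) * \<bar>dalpha k \<xi> t\<bar> / a"
    using a by (simp add: field_simps power2_eq_square)
  also have "\<dots> \<le> m2_times_p2 e mm k \<xi> t * \<bar>dalpha k \<xi> t\<bar> / a"
    using assms(2) a unfolding m2_times_p2_def a_def K_def
    by (intro divide_right_mono mult_right_mono) auto
  finally show ?thesis
    by (simp add: a_def K_def)
qed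

lemma abs_h2_derivative_le:
  assumes "k \<noteq> 0"
  shows "\<bar>(real_of_int k)\<^sup>2 / (2 * alpha k \<xi> t) - (dalpha k \<xi> t)\<^sup>2 / (4 * (alpha k \<xi> t)\<^sup>2)\<bar>
    \<le> 3 * (real_of_int k)\<^sup>2 / (2 * alpha k \<xi> t)"
proof -
  define a K where "a = alpha k \<xi> t" and "K = (real_of_int k)\<^sup>2"
  have a: "0 < a" "0 \<le> K"
    using alpha_pos[OF assms] unfolding a_def K_def by auto
  have "(dalpha k \<xi> t)\<^sup>2 / (4 * a\<^sup>2) \<le> 4 * K * a / (4 * a\<^sup>2)"
    using dalpha_sq_le a unfolding a_def K_def by (intro divide_right_mono) auto
  also have "\<dots> = 2 * (K / (2 * a))"
    using a by (simp add: power2_eq_square)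
  finally have "(dalpha k \<xi> t)\<^sup>2 / (4 * a\<^sup>2) \<le> 2 * (K / (2 * a))" .
  moreover have "0 \<le> K / (2 * a)" and "3 * K / (2 * a) = 3 * (K / (2 * a))"
    using a by simp_all
  moreover have "0 \<le> (dalpha k \<xi> t)\<^sup>2 / (4 * a\<^sup>2)"
    by simp
  ultimately show ?thesis
    unfolding a_def[symmetric] K_def[symmetric] abs_le_iff by linarith
qed

lemma coupling_derivative:
  assumes "k \<noteq> 0" and "e > 0" and "mm > 0"
  shows "(coupling e mm k \<xi> has_real_derivative deriv (coupling e mm k \<xi>) t) (at t)"
    and "\<bar>deriv (coupling e mm k \<xi>) t\<bar>
      \<le> 2 / sqrt (4 * pi * e\<^sup>2 / mm) * (real_of_int k)\<^sup>2 / alpha k \<xi> t"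
proof -
  define a K d Q c0 where "a = alpha k \<xi> t" and "K = (real_of_int k)\<^sup>2" and "d = dalpha k \<xi> t"
    and "Q = m2_times_p2 e mm k \<xi> t" and "c0 = 4 * pi * e\<^sup>2 / mm"
  define h h' Q' where "h = h2 k \<xi> t" and "h' = K / (2 * a) - d\<^sup>2 / (4 * a\<^sup>2)"
    and "Q' = (1 / mm - 2 * K / a\<^sup>2) * d"
  have a: "0 < a"
    using alpha_pos[OF assms(1)] unfolding a_def .
  have c0: "0 < c0" "c0 \<le> Q"
    using assms a unfolding c0_def Q_def m2_times_p2_def a_def K_def by auto
  have "((\<lambda>t. m2_times_p2 e mm k \<xi> t) has_real_derivative Q') (at t)"
    using m2_times_p2_has_derivative[OF assms(1,3)] unfolding Q'_def a_def K_def d_def .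
  moreover have "coupling e mm k \<xi> = (\<lambda>t. h2 k \<xi> t / sqrt (m2_times_p2 e mm k \<xi> t))"
    using coupling_eq[OF assms(1,3)] by auto
  ultimately have D: "(coupling e mm k \<xi> has_real_derivative (h' - h * Q' / (2 * Q)) / sqrt Q) (at t)"
    using h2_has_derivative[OF assms(1), of \<xi> t] c0
    unfolding h'_def h_def Q_def a_def K_def d_def
    by (auto intro!: derivative_eq_intros simp: field_simps)
  then show "(coupling e mm k \<xi> has_real_derivative deriv (coupling e mm k \<xi>) t) (at t)"
    by (simp add: DERIV_imp_deriv)
  have "\<bar>h * Q' / (2 * Q)\<bar> = \<bar>h\<bar> * \<bar>Q'\<bar> / (2 * Q)"
    using c0 by (simp add: abs_mult)
  also have "\<dots> \<le> \<bar>h\<bar> * (Q * \<bar>d\<bar> / a) / (2 * Q)"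
    using abs_m2_times_p2_derivative_le[OF assms(1,3), of \<xi> t e] c0
    unfolding Q'_def Q_def a_def K_def d_def by (intro divide_right_mono mult_left_mono) auto
  also have "\<dots> = d\<^sup>2 / (8 * a\<^sup>2)"
    using c0 a unfolding h_def h2_def d_def[symmetric] a_def[symmetric]
    by (simp add: abs_mult field_simps power2_eq_square)
  also have "\<dots> \<le> 4 * K * a / (8 * a\<^sup>2)"
    using dalpha_sq_le a unfolding d_def K_def a_def by (intro divide_right_mono) auto
  also have "\<dots> = K / (2 * a)"
    using a by (simp add: power2_eq_square)
  finally have "\<bar>h' - h * Q' / (2 * Q)\<bar> \<le> 3 * K / (2 * a) + K / (2 * a)"
    using abs_h2_derivative_le[OF assms(1), of \<xi> t] abs_triangle_ineq4[of h' "h * Q' / (2 * Q)"]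
    unfolding h'_def a_def K_def d_def by linarith
  also have "\<dots> = 2 * K / a"
    using a by (simp add: field_simps)
  finally have "\<bar>h' - h * Q' / (2 * Q)\<bar> / sqrt Q \<le> 2 * K / a / sqrt c0"
    using c0 a by (intro frac_le) auto
  then show "\<bar>deriv (coupling e mm k \<xi>) t\<bar>
      \<le> 2 / sqrt (4 * pi * e\<^sup>2 / mm) * (real_of_int k)\<^sup>2 / alpha k \<xi> t"
    using DERIV_imp_deriv[OF D] c0 unfolding c0_def a_def K_def by (simp add: abs_divide mult.commute)
qed

section \<open>Energy estimates\<close>

definition energy_rate :: "real \<Rightarrow> real \<Rightarrow> real" where
  "energy_rate e mm = 2 * pi * e\<^sup>2 + 2 * mm + 2 / sqrt (4 * pi * e\<^sup>2 / mm)"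

lemma energy_has_derivative:
  assumes "k \<noteq> 0" and "e > 0" and "mm > 0" and sol: "is_sol e mm k \<xi> B1 B2" and "t \<ge> 0"
  defines "a \<equiv> weight e mm k \<xi>" and "b \<equiv> coupling e mm k \<xi>"
  shows "((\<lambda>t. energy e mm k \<xi> B1 B2 t) has_real_derivative
      deriv a t * (cmod (B1 t))\<^sup>2 + 2 * deriv b t * Re (B1 t * cnj (B2 t))
      - deriv a t * (cmod (B2 t))\<^sup>2 / (a t)\<^sup>2) (at t within {0..})"
proof -
  have a_pos: "a t > 0"
    using weight_bounds(1)[OF assms(1,3), of e \<xi> t] unfolding a_def by simp
  have m_pos: "m2 mm k \<xi> t > 0"
    using m2_pos[OF assms(1,3)] .
  have p: "p2 e mm k \<xi> t = m2 mm k \<xi> t * (a t)\<^sup>2"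
    using p2_eq_m2_mult[OF assms(1,3)] p2_over_m2_bounds(1)[OF assms(1,3), of e \<xi> t]
    unfolding a_def weight_eq[OF assms(1,3)] by simp
  have "sqrt (m2 mm k \<xi> t * p2 e mm k \<xi> t) = m2 mm k \<xi> t * a t"
    unfolding p using m_pos a_pos by (simp add: real_sqrt_mult power2_eq_square)
  then have bh: "b t = h2 k \<xi> t / (m2 mm k \<xi> t * a t)"
    unfolding b_def coupling_def by simp
  have da: "(a has_real_derivative deriv a t) (at t within {0..})"
    using weight_derivative(1)[OF assms(1,3)] unfolding a_def by (rule has_field_derivative_at_within)
  have db: "(b has_real_derivative deriv b t) (at t within {0..})"
    using coupling_derivative(1)[OF assms(1-3)] unfolding b_def by (rule has_field_derivative_at_within)
  have "(B1 has_vector_derivative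
      (- complex_of_real (h2 k \<xi> t) * B1 t - complex_of_real (m2 mm k \<xi> t) * B2 t)) (at t within {0..})"
    and "(B2 has_vector_derivative
      (complex_of_real (p2 e mm k \<xi> t) * B1 t + complex_of_real (h2 k \<xi> t) * B2 t)) (at t within {0..})"
    using sol \<open>t \<ge> 0\<close> unfolding is_sol_def by auto
  from qform_has_derivative[OF this da db a_pos m_pos p bh]
  show ?thesis
    unfolding energy_eq_qform a_def b_def .
qed

lemma energy_has_derivative_bounded:
  assumes "k \<noteq> 0" and "e > 0" and "mm > 0" and sol: "is_sol e mm k \<xi> B1 B2" and "t \<ge> 0"
  shows "\<exists>D. ((\<lambda>t. energy e mm k \<xi> B1 B2 t) has_real_derivative D) (at t within {0..}) \<and>
    \<bar>D\<bar> \<le> 2 * energy_rate e mm * (real_of_int k)\<^sup>2 / alpha k \<xi> t * energy e mm k \<xi> B1 B2 t"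
proof -
  define a b where "a = weight e mm k \<xi>" and "b = coupling e mm k \<xi>"
  have a_pos: "a t > 0" and b: "\<bar>b t\<bar> \<le> 1/2"
    using weight_bounds(1)[OF assms(1,3), of e \<xi> t] abs_coupling_le[OF assms(1,3)]
    unfolding a_def b_def by auto
  have "\<bar>deriv a t\<bar> / a t + \<bar>deriv b t\<bar> \<le> energy_rate e mm * (real_of_int k)\<^sup>2 / alpha k \<xi> t"
    using add_mono[OF weight_derivative(2)[OF assms(1,3)] coupling_derivative(2)[OF assms(1-3)]]
    unfolding a_def b_def energy_rate_def by (simp add: add_divide_distrib distrib_right)
  then have "2 * (\<bar>deriv a t\<bar> / a t + \<bar>deriv b t\<bar>) * qform (a t) (b t) (B1 t) (B2 t)
      \<le> 2 * (energy_rate e mm * (real_of_int k)\<^sup>2 / alpha k \<xi> t) * qform (a t) (b t) (B1 t) (B2 t)"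
    using qform_nonneg[OF a_pos b] by (intro mult_right_mono) auto
  then have "\<bar>deriv a t * (cmod (B1 t))\<^sup>2 + 2 * deriv b t * Re (B1 t * cnj (B2 t))
      - deriv a t * (cmod (B2 t))\<^sup>2 / (a t)\<^sup>2\<bar>
      \<le> 2 * energy_rate e mm * (real_of_int k)\<^sup>2 / alpha k \<xi> t * energy e mm k \<xi> B1 B2 t"
    using abs_qform_derivative_le[OF a_pos b, of "deriv a t" "B1 t" "deriv b t" "B2 t"]
    unfolding energy_eq_qform a_def[symmetric] b_def[symmetric] by simp
  with energy_has_derivative[OF assms, folded a_def b_def] show ?thesis
    by blast
qed

lemma energy_nonneg:
  assumes "k \<noteq> 0" and "mm > 0"
  shows "0 \<le> energy e mm k \<xi> B1 B2 t"
proof -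
  have "0 < weight e mm k \<xi> t"
    using weight_bounds(1)[OF assms, of e \<xi> t] by simp
  then show ?thesis
    unfolding energy_eq_qform using abs_coupling_le[OF assms] by (rule qform_nonneg)
qed

lemma energy_two_sided_bound:
  assumes "k \<noteq> 0" and "e > 0" and "mm > 0" and sol: "is_sol e mm k \<xi> B1 B2" and "t \<ge> 0"
  shows "exp (- 2 * energy_rate e mm * pi) * energy e mm k \<xi> B1 B2 0 \<le> energy e mm k \<xi> B1 B2 t"
    and "energy e mm k \<xi> B1 B2 t \<le> exp (2 * energy_rate e mm * pi) * energy e mm k \<xi> B1 B2 0"
proof -
  define c w E where "c = 2 * energy_rate e mm"
    and "w = (\<lambda>t. c * arctan (t - \<xi> / real_of_int k))" and "E = energy e mm k \<xi> B1 B2"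
  have dE: "\<exists>D. (E has_real_derivative D) (at x within {0..}) \<and>
      \<bar>D\<bar> \<le> c * (real_of_int k)\<^sup>2 / alpha k \<xi> x * E x" if "x \<ge> 0" for x
    using energy_has_derivative_bounded[OF assms(1-4) that] unfolding E_def c_def .
  have dw: "(w has_real_derivative c * (real_of_int k)\<^sup>2 / alpha k \<xi> x) (at x within {0..})" for x
    unfolding w_def using DERIV_cmult[OF arctan_shift_has_derivative[OF assms(1)], of c \<xi> x]
    by (simp add: has_field_derivative_at_within)
  have c: "0 \<le> c"
    using assms(2,3) unfolding c_def energy_rate_def by simp
  have w: "- (c * pi) \<le> w t - w 0" "w t - w 0 \<le> c * pi"
  proof -
    have "\<bar>arctan (t - \<xi> / real_of_int k) - arctan (0 - \<xi> / real_of_int k)\<bar> \<le> pi"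
      using arctan_bounded[of "t - \<xi> / real_of_int k"] arctan_bounded[of "0 - \<xi> / real_of_int k"]
      by (auto simp: abs_le_iff)
    then have "\<bar>w t - w 0\<bar> \<le> c * pi"
      using c unfolding w_def by (simp add: abs_mult mult_left_mono flip: right_diff_distrib)
    then show "- (c * pi) \<le> w t - w 0" "w t - w 0 \<le> c * pi"
      by (simp_all add: abs_le_iff)
  qed
  have E0: "0 \<le> E 0"
    unfolding E_def using energy_nonneg[OF assms(1,3)] .
  have "exp (- c * pi) * E 0 \<le> E 0 * exp (w 0 - w t)"
    using w E0 by (simp add: mult.commute mult_left_mono)
  also have "\<dots> \<le> E t"
    using two_sided_gronwall(1)[OF dE dw \<open>t \<ge> 0\<close>] .
  finally show "exp (- 2 * energy_rate e mm * pi) * energy e mm k \<xi> B1 B2 0 \<le> energy e mm k \<xi> B1 B2 t"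
    unfolding E_def c_def by simp
  have "E t \<le> E 0 * exp (w t - w 0)"
    using two_sided_gronwall(2)[OF dE dw \<open>t \<ge> 0\<close>] .
  also have "\<dots> \<le> exp (c * pi) * E 0"
    using w E0 by (simp add: mult.commute mult_left_mono)
  finally show "energy e mm k \<xi> B1 B2 t \<le> exp (2 * energy_rate e mm * pi) * energy e mm k \<xi> B1 B2 0"
    unfolding E_def c_def by simp
qed

lemma energy_comparable_Bnorm:
  fixes e :: real
  assumes "k \<noteq> 0" and "mm > 0"
  defines "A \<equiv> sqrt (1 + 4 * pi * e\<^sup>2 + 2 * mm)"
  shows "(Bnorm B1 B2 t)\<^sup>2 / (2 * A) \<le> energy e mm k \<xi> B1 B2 t"
    and "energy e mm k \<xi> B1 B2 t \<le> 3 * A / 2 * (Bnorm B1 B2 t)\<^sup>2"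
proof -
  define a x y where "a = weight e mm k \<xi> t"
    and "x = (cmod (B1 t))\<^sup>2" and "y = (cmod (B2 t))\<^sup>2"
  have a: "1 \<le> a" "a \<le> A"
    using weight_bounds[OF assms(1,2)] unfolding a_def A_def by auto
  have S: "(x + y) / A \<le> a * x + y / a" "a * x + y / a \<le> A * (x + y)"
    using weighted_sum_bounds[OF a] unfolding x_def y_def by simp_all
  have E: "(a * x + y / a) / 2 \<le> energy e mm k \<xi> B1 B2 t"
    "energy e mm k \<xi> B1 B2 t \<le> 3 * (a * x + y / a) / 2"
    using qform_bounds[of a "coupling e mm k \<xi> t"] a abs_coupling_le[OF assms(1,2)]
    unfolding energy_eq_qform a_def x_def y_def by auto
  have B: "(Bnorm B1 B2 t)\<^sup>2 = x + y"
    by (simp add: Bnorm_def x_def y_def)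
  have "(x + y) / (2 * A) = (x + y) / A / 2"
    by simp
  also have "\<dots> \<le> (a * x + y / a) / 2"
    using S(1) by (rule divide_right_mono) simp
  finally show "(Bnorm B1 B2 t)\<^sup>2 / (2 * A) \<le> energy e mm k \<xi> B1 B2 t"
    unfolding B using E(1) by linarith
  have "3 * (a * x + y / a) / 2 \<le> 3 * (A * (x + y)) / 2"
    using S(2) by simp
  then show "energy e mm k \<xi> B1 B2 t \<le> 3 * A / 2 * (Bnorm B1 B2 t)\<^sup>2"
    unfolding B using E(2) by simp
qed

lemma Bnorm_two_sided_bound:
  fixes e :: real
  assumes "k \<noteq> 0" and "e > 0" and "mm > 0" and sol: "is_sol e mm k \<xi> B1 B2" and "t \<ge> 0"
  defines "A \<equiv> sqrt (1 + 4 * pi * e\<^sup>2 + 2 * mm)" and "c \<equiv> 2 * energy_rate e mm * pi"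
  shows "sqrt (exp (- c) / 3) / A * Bnorm B1 B2 0 \<le> Bnorm B1 B2 t"
    and "Bnorm B1 B2 t \<le> A * sqrt (3 * exp c) * Bnorm B1 B2 0"
proof -
  have "1 \<le> A" and "exp (- c) \<le> exp c"
    using assms(2,3) unfolding A_def c_def energy_rate_def by simp_all
  moreover have "0 \<le> Bnorm B1 B2 s" for s
    by (simp add: Bnorm_def)
  ultimately show "sqrt (exp (- c) / 3) / A * Bnorm B1 B2 0 \<le> Bnorm B1 B2 t"
    and "Bnorm B1 B2 t \<le> A * sqrt (3 * exp c) * Bnorm B1 B2 0"
    using norm_bounds_of_energy_bounds[OF _ exp_gt_zero _ _ _
        energy_comparable_Bnorm[OF assms(1,3)] energy_comparable_Bnorm[OF assms(1,3)]
        energy_two_sided_bound[OF assms(1-5)]]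
    unfolding A_def c_def by auto
qed

theorem lemma4p1:
  fixes e mm :: real
  assumes "e > 0" and "mm > 0"
  shows "\<exists>C1 C1' C2 C2'. 0 < C1 \<and> C1 \<le> C1' \<and> 0 < C2 \<and> C2 \<le> C2' \<and>
    (\<forall>k::int. \<forall>\<xi>::real. \<forall>B1 B2. k \<noteq> 0 \<longrightarrow> is_sol e mm k \<xi> B1 B2 \<longrightarrow>
      (\<forall>t\<ge>0.
         C1 * energy e mm k \<xi> B1 B2 0 \<le> energy e mm k \<xi> B1 B2 t \<and>
         energy e mm k \<xi> B1 B2 t \<le> C1' * energy e mm k \<xi> B1 B2 0 \<and>
         C2 * Bnorm B1 B2 0 \<le> Bnorm B1 B2 t \<and>
         Bnorm B1 B2 t \<le> C2' * Bnorm B1 B2 0))"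
proof -
  define c A where "c = 2 * energy_rate e mm * pi" and "A = sqrt (1 + 4 * pi * e\<^sup>2 + 2 * mm)"
  have c: "0 \<le> c" and A: "1 \<le> A"
    using assms unfolding c_def energy_rate_def A_def by simp_all
  have "sqrt (exp (- c) / 3) / A \<le> sqrt (exp (- c) / 3) / 1"
    using A by (intro divide_left_mono) auto
  also have "\<dots> \<le> 1 * 1"
    using c by (auto intro: order_trans[of _ 1])
  also have "\<dots> \<le> A * sqrt (3 * exp c)"
    using c A by (intro mult_mono) (auto intro: order_trans[of 1 "exp c"])
  finally have "sqrt (exp (- c) / 3) / A \<le> A * sqrt (3 * exp c)" .
  then show ?thesis
    using energy_two_sided_bound[OF _ assms] Bnorm_two_sided_bound[OF _ assms] c A
    by (intro exI[of _ "exp (- c)"] exI[of _ "exp c"] exI[of _ "sqrt (exp (- c) / 3) / A"]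
        exI[of _ "A * sqrt (3 * exp c)"]) (auto simp: c_def A_def)
qed

end
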